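(* Let $G$ be a group and let $(\mu_i,\lambda_i)$, $i\in I\cup J$, be pairs of commuting elements of $G$ (with $I,J$ index sets). Let $j_0\in J$, let $p,q$ be relatively prime integers, and let $N$ be the normal subgroup of $G$ generated by $\mu_{j_0}^p\lambda_{j_0}^q$. Let $s_i\in\mathbb{RP}^1$ for $i\in I$ and $s_j\in\mathbb{QP}^1$ for $j\in J$ be slopes with $s_{j_0}=[p:q]$. Then the following are equivalent: (a) there is a left total preorder $\le_0$ on $G$ such that $s_i$ is weakly $\le_0$-detected with respect to $(\mu_i,\lambda_i)$ for every $i\in I$, and $s_j$ is strongly $\le_0$-detected with respect to $(\mu_j,\lambda_j)$ for every $j\in J$; (b) there is a left total preorder $\le$ on $G/N$ such that $s_i$ is weakly $\le$-detected with respect to $(\mu_iN,\lambda_iN)$ for every $i\in I$, and $s_j$ is strongly $\le$-detected with respect to $(\mu_jN,\lambda_jN)$ for every $j\in J\setminus\{j_0\}$.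
   Context: A left total preorder on a group $G$ is a binary relation $\le$ on $G$ that is reflexive, transitive, total ($x\le y$ or $y\le x$ for all $x,y$), left-invariant ($x\le y\Rightarrow gx\le gy$), and proper, i.e. not the trivial relation in which $x\le y$ for all $x,y$. Its residue group is $\{g\in G: g\le 1 \text{ and } 1\le g\}$. For commuting $\mu,\lambda\in G$, a slope $[x:y]\in\mathbb{RP}^1$ is weakly $\le$-detected with respect to $(\mu,\lambda)$ if $\mu^{p_2}\lambda^{q_2}\ge 1$ for all integers $p_1,q_1,p_2,q_2$ with $\mu^{p_1}\lambda^{q_1}\ge 1$ and $(p_1y-q_1x)(p_2y-q_2x)>0$. A slope $[p:q]\in\mathbb{QP}^1$ ($p,q$ relatively prime integers) is strongly $\le$-detected with respect to $(\mu,\lambda)$ if every conjugate of $\mu^p\lambda^q$ lies in the residue group of $\le$. *)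

theory Defs
  imports "HOL-Algebra.Algebra"
begin

definition left_total_preorder :: "('a, 'b) monoid_scheme \<Rightarrow> ('a \<Rightarrow> 'a \<Rightarrow> bool) \<Rightarrow> bool" where
  "left_total_preorder G R \<longleftrightarrow>
     (\<forall>x\<in>carrier G. R x x) \<and>
     (\<forall>x\<in>carrier G. \<forall>y\<in>carrier G. \<forall>z\<in>carrier G. R x y \<longrightarrow> R y z \<longrightarrow> R x z) \<and>
     (\<forall>x\<in>carrier G. \<forall>y\<in>carrier G. R x y \<or> R y x) \<and>
     (\<forall>g\<in>carrier G. \<forall>x\<in>carrier G. \<forall>y\<in>carrier G. R x y \<longrightarrow> R (g \<otimes>\<^bsub>G\<^esub> x) (g \<otimes>\<^bsub>G\<^esub> y)) \<and>
     \<not> (\<forall>x\<in>carrier G. \<forall>y\<in>carrier G. R x y)"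

definition residue_group :: "('a, 'b) monoid_scheme \<Rightarrow> ('a \<Rightarrow> 'a \<Rightarrow> bool) \<Rightarrow> 'a set" where
  "residue_group G R = {g \<in> carrier G. R g \<one>\<^bsub>G\<^esub> \<and> R \<one>\<^bsub>G\<^esub> g}"

text \<open>A slope [x:y] in RP^1 is represented by a nonzero real pair (x,y); the condition is
  invariant under nonzero rescaling.\<close>
definition weakly_detected ::
  "('a, 'b) monoid_scheme \<Rightarrow> ('a \<Rightarrow> 'a \<Rightarrow> bool) \<Rightarrow> 'a \<Rightarrow> 'a \<Rightarrow> real \<times> real \<Rightarrow> bool" where
  "weakly_detected G R \<mu> l s \<longleftrightarrow>
     (\<forall>p1 q1 p2 q2 :: int.
        R \<one>\<^bsub>G\<^esub> (\<mu> [^]\<^bsub>G\<^esub> p1 \<otimes>\<^bsub>G\<^esub> l [^]\<^bsub>G\<^esub> q1) \<and>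
        (of_int p1 * snd s - of_int q1 * fst s) * (of_int p2 * snd s - of_int q2 * fst s) > 0
        \<longrightarrow> R \<one>\<^bsub>G\<^esub> (\<mu> [^]\<^bsub>G\<^esub> p2 \<otimes>\<^bsub>G\<^esub> l [^]\<^bsub>G\<^esub> q2))"

text \<open>A slope [p:q] in QP^1 is represented by a pair of coprime integers (p,q).\<close>
definition strongly_detected ::
  "('a, 'b) monoid_scheme \<Rightarrow> ('a \<Rightarrow> 'a \<Rightarrow> bool) \<Rightarrow> 'a \<Rightarrow> 'a \<Rightarrow> int \<times> int \<Rightarrow> bool" where
  "strongly_detected G R \<mu> l s \<longleftrightarrow>
     (\<forall>g\<in>carrier G. g \<otimes>\<^bsub>G\<^esub> (\<mu> [^]\<^bsub>G\<^esub> fst s \<otimes>\<^bsub>G\<^esub> l [^]\<^bsub>G\<^esub> snd s) \<otimes>\<^bsub>G\<^esub> inv\<^bsub>G\<^esub> g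
        \<in> residue_group G R)"

definition normal_closure :: "('a, 'b) monoid_scheme \<Rightarrow> 'a set \<Rightarrow> 'a set" where
  "normal_closure G S = generate G {g \<otimes>\<^bsub>G\<^esub> s \<otimes>\<^bsub>G\<^esub> inv\<^bsub>G\<^esub> g | g s. g \<in> carrier G \<and> s \<in> S}"

end

theory Submission
  imports Defs
begin

text \<open>The quotient map \<open>G \<rightarrow> G/N\<close> is a surjective homomorphism, and pulling relations back
  along a surjective homomorphism preserves and reflects being a left total preorder as well as weak
  and strong detection. The left total preorders on \<open>G\<close> obtained in this way are exactly those
  whose residue group contains \<open>N\<close>, since a left total preorder is constant on the cosets of any
  normal subgroup of its residue group. As the residue group is a subgroup, it contains \<open>N\<close>
  precisely when \<open>[p:q]\<close> is strongly detected with respect to \<open>(\<mu>\<^sub>j\<^sub>0, \<lambda>\<^sub>j\<^sub>0)\<close>.\<close>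

lemma left_total_preorder_refl:
  "left_total_preorder G R \<Longrightarrow> x \<in> carrier G \<Longrightarrow> R x x"
  unfolding left_total_preorder_def by blast

lemma left_total_preorder_trans:
  "left_total_preorder G R \<Longrightarrow> R x y \<Longrightarrow> R y z
    \<Longrightarrow> x \<in> carrier G \<Longrightarrow> y \<in> carrier G \<Longrightarrow> z \<in> carrier G \<Longrightarrow> R x z"
  unfolding left_total_preorder_def by blast

lemma left_total_preorder_mult_left:
  "left_total_preorder G R \<Longrightarrow> R x y
    \<Longrightarrow> g \<in> carrier G \<Longrightarrow> x \<in> carrier G \<Longrightarrow> y \<in> carrier G \<Longrightarrow> R (g \<otimes>\<^bsub>G\<^esub> x) (g \<otimes>\<^bsub>G\<^esub> y)"
  unfolding left_total_preorder_def by blast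

lemma (in group) left_total_preorder_mult_residue:
  assumes R: "left_total_preorder G R" and x: "x \<in> carrier G" and z: "z \<in> residue_group G R"
  shows "R x (x \<otimes> z)" and "R (x \<otimes> z) x"
proof -
  from z have zc: "z \<in> carrier G" and z1: "R z \<one>" and one_z: "R \<one> z"
    unfolding residue_group_def by auto
  have "R (x \<otimes> \<one>) (x \<otimes> z)" "R (x \<otimes> z) (x \<otimes> \<one>)"
    using left_total_preorder_mult_left[OF R one_z x one_closed zc]
      left_total_preorder_mult_left[OF R z1 x zc one_closed] .
  with x show "R x (x \<otimes> z)" and "R (x \<otimes> z) x" by simp_all
qed

lemma (in group) residue_group_subgroup:
  assumes R: "left_total_preorder G R"
  shows "subgroup (residue_group G R) G"
proof (rule subgroupI)
  show "residue_group G R \<subseteq> carrier G" and "residue_group G R \<noteq> {}"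
    using left_total_preorder_refl[OF R] unfolding residue_group_def by auto
next
  fix a assume a: "a \<in> residue_group G R"
  hence ac: "a \<in> carrier G" unfolding residue_group_def by simp
  from left_total_preorder_mult_residue[OF R inv_closed[OF ac] a] ac
  show "inv a \<in> residue_group G R" unfolding residue_group_def by simp
next
  fix a b assume a: "a \<in> residue_group G R" and b: "b \<in> residue_group G R"
  hence ac: "a \<in> carrier G" and bc: "b \<in> carrier G" and "R a \<one>" and "R \<one> a"
    unfolding residue_group_def by auto
  moreover note left_total_preorder_mult_residue[OF R ac b]
  ultimately show "a \<otimes> b \<in> residue_group G R"
    unfolding residue_group_def
    by (auto intro: left_total_preorder_trans[OF R])
qed

lemma (in normal) left_total_preorder_descends:
  assumes R0: "left_total_preorder G R0" and H: "H \<subseteq> residue_group G R0"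
  obtains R where "\<And>x y. x \<in> carrier G \<Longrightarrow> y \<in> carrier G \<Longrightarrow> R0 x y \<longleftrightarrow> R (H #> x) (H #> y)"
proof -
  define R where "R A B \<longleftrightarrow> (\<exists>x'\<in>A. \<exists>y'\<in>B. R0 x' y')" for A B
  have coset_equiv: "R0 x x'" "R0 x' x" if x: "x \<in> carrier G" and x': "x' \<in> H #> x" for x x'
  proof -
    from x' x coset_eq obtain n where "n \<in> H" and "x' = x \<otimes> n"
      unfolding l_coset_def by auto
    with H left_total_preorder_mult_residue[OF R0 x]
    show "R0 x x'" "R0 x' x" by auto
  qed
  have "R0 x y \<longleftrightarrow> R (H #> x) (H #> y)" if x: "x \<in> carrier G" and y: "y \<in> carrier G" for x y
  proof
    assume "R0 x y"
    with x y show "R (H #> x) (H #> y)"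
      unfolding R_def using rcos_self[OF _ subgroup_axioms] by blast
  next
    assume "R (H #> x) (H #> y)"
    then obtain x' y' where x': "x' \<in> H #> x" and y': "y' \<in> H #> y" and "R0 x' y'"
      unfolding R_def by blast
    moreover have "x' \<in> carrier G" "y' \<in> carrier G"
      using x y x' y' elemrcos_carrier[OF is_group] by blast+
    ultimately show "R0 x y"
      using x y coset_equiv[OF x x'] coset_equiv[OF y y'] left_total_preorder_trans[OF R0] by meson
  qed
  then show thesis by (rule that)
qed

lemma (in group) conj_in_normal_closure:
  "g \<in> carrier G \<Longrightarrow> s \<in> S \<Longrightarrow> g \<otimes> s \<otimes> inv g \<in> normal_closure G S"
  unfolding normal_closure_def by (intro generate.incl) blast

lemma (in group) normal_closure_subset:
  assumes "subgroup K G" and "\<And>g s. g \<in> carrier G \<Longrightarrow> s \<in> S \<Longrightarrow> g \<otimes> s \<otimes> inv g \<in> K"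
  shows "normal_closure G S \<subseteq> K"
  unfolding normal_closure_def
  by (rule generate_subgroup_incl[OF _ assms(1)]) (use assms(2) in blast)

lemma (in group) normal_closure_normal:
  assumes "S \<subseteq> carrier G"
  shows "normal_closure G S \<lhd> G"
  unfolding normal_closure_def
proof (rule normal_generateI)
  show "{g \<otimes> s \<otimes> inv g |g s. g \<in> carrier G \<and> s \<in> S} \<subseteq> carrier G"
    using assms by auto
next
  fix c g assume "c \<in> {g \<otimes> s \<otimes> inv g |g s. g \<in> carrier G \<and> s \<in> S}" and g: "g \<in> carrier G"
  then obtain k s where k: "k \<in> carrier G" and s: "s \<in> S" and c: "c = k \<otimes> s \<otimes> inv k" by blast
  have "g \<otimes> c \<otimes> inv g = (g \<otimes> k) \<otimes> s \<otimes> inv (g \<otimes> k)"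
    using g k s assms c by (auto simp: m_assoc inv_mult_group)
  with g k s show "g \<otimes> c \<otimes> inv g \<in> {g \<otimes> s \<otimes> inv g |g s. g \<in> carrier G \<and> s \<in> S}"
    by blast
qed

lemma (in group) strongly_detected_iff_normal_closure_subset:
  assumes "left_total_preorder G R"
  shows "strongly_detected G R \<mu> l s \<longleftrightarrow>
    normal_closure G {\<mu> [^] fst s \<otimes> l [^] snd s} \<subseteq> residue_group G R"
  unfolding strongly_detected_def
proof
  assume "\<forall>g\<in>carrier G. g \<otimes> (\<mu> [^] fst s \<otimes> l [^] snd s) \<otimes> inv g \<in> residue_group G R"
  then show "normal_closure G {\<mu> [^] fst s \<otimes> l [^] snd s} \<subseteq> residue_group G R"
    by (intro normal_closure_subset[OF residue_group_subgroup[OF assms]]) auto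
next
  assume "normal_closure G {\<mu> [^] fst s \<otimes> l [^] snd s} \<subseteq> residue_group G R"
  with conj_in_normal_closure
  show "\<forall>g\<in>carrier G. g \<otimes> (\<mu> [^] fst s \<otimes> l [^] snd s) \<otimes> inv g \<in> residue_group G R"
    by blast
qed

locale rel_pullback = group_hom +
  fixes R0 R
  assumes surj: "h ` carrier G = carrier H"
    and pullback: "\<And>x y. x \<in> carrier G \<Longrightarrow> y \<in> carrier G \<Longrightarrow> R0 x y \<longleftrightarrow> R (h x) (h y)"
begin

lemma Ball_carrier_H: "(\<forall>a\<in>carrier H. P a) \<longleftrightarrow> (\<forall>x\<in>carrier G. P (h x))"
  unfolding surj[symmetric] by blast

lemma left_total_preorder_iff: "left_total_preorder G R0 \<longleftrightarrow> left_total_preorder H R"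
  unfolding left_total_preorder_def Ball_carrier_H
  by (simp add: pullback)

lemma weakly_detected_iff:
  "\<mu> \<in> carrier G \<Longrightarrow> l \<in> carrier G \<Longrightarrow>
    weakly_detected G R0 \<mu> l s \<longleftrightarrow> weakly_detected H R (h \<mu>) (h l) s"
  unfolding weakly_detected_def by (simp add: pullback hom_int_pow)

lemma residue_group_eq: "residue_group G R0 = {g \<in> carrier G. h g \<in> residue_group H R}"
  unfolding residue_group_def by (auto simp: pullback)

lemma strongly_detected_iff:
  "\<mu> \<in> carrier G \<Longrightarrow> l \<in> carrier G \<Longrightarrow>
    strongly_detected G R0 \<mu> l s \<longleftrightarrow> strongly_detected H R (h \<mu>) (h l) s"
  unfolding strongly_detected_def residue_group_eq Ball_carrier_H
  by (simp add: hom_int_pow)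

lemma kernel_subset_residue_group:
  "left_total_preorder H R \<Longrightarrow> kernel G H h \<subseteq> residue_group G R0"
proof -
  assume "left_total_preorder H R"
  then have "R \<one>\<^bsub>H\<^esub> \<one>\<^bsub>H\<^esub>" by (rule left_total_preorder_refl) simp
  then show ?thesis
    unfolding residue_group_eq kernel_def by (auto simp: residue_group_def)
qed

end

lemma (in normal) quotient_detection_iff:
  assumes "\<forall>i\<in>I. \<mu>I i \<in> carrier G \<and> lI i \<in> carrier G"
    and "\<forall>j\<in>J. \<mu>J j \<in> carrier G \<and> lJ j \<in> carrier G"
  shows "(\<exists>R0. left_total_preorder G R0 \<and> H \<subseteq> residue_group G R0 \<and>
            (\<forall>i\<in>I. weakly_detected G R0 (\<mu>I i) (lI i) (sI i)) \<and>
            (\<forall>j\<in>J. strongly_detected G R0 (\<mu>J j) (lJ j) (sJ j)))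
    \<longleftrightarrow> (\<exists>R. left_total_preorder (G Mod H) R \<and>
            (\<forall>i\<in>I. weakly_detected (G Mod H) R (H #> \<mu>I i) (H #> lI i) (sI i)) \<and>
            (\<forall>j\<in>J. strongly_detected (G Mod H) R (H #> \<mu>J j) (H #> lJ j) (sJ j)))"
    (is "?lhs \<longleftrightarrow> ?rhs")
proof -
  have quotient_map: "group_hom G (G Mod H) (r_coset G H)"
    using r_coset_hom_Mod factorgroup_is_group by (simp add: group_hom_def group_hom_axioms_def)
  have quotient_map_surj: "r_coset G H ` carrier G = carrier (G Mod H)"
    by (simp add: carrier_FactGroup)
  have H_kernel: "H \<subseteq> kernel G (G Mod H) (r_coset G H)"
    unfolding kernel_def using rcos_const[OF is_group] by auto
  show ?thesis
  proof
    assume ?lhs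
    then obtain R0 where R0: "left_total_preorder G R0" and "H \<subseteq> residue_group G R0"
      and weak: "\<forall>i\<in>I. weakly_detected G R0 (\<mu>I i) (lI i) (sI i)"
      and strong: "\<forall>j\<in>J. strongly_detected G R0 (\<mu>J j) (lJ j) (sJ j)" by blast
    then obtain R where "\<And>x y. x \<in> carrier G \<Longrightarrow> y \<in> carrier G \<Longrightarrow> R0 x y \<longleftrightarrow> R (H #> x) (H #> y)"
      using left_total_preorder_descends by blast
    then interpret rel_pullback G "G Mod H" "r_coset G H" R0 R
      using quotient_map quotient_map_surj by (simp add: rel_pullback_def rel_pullback_axioms_def)
    show ?rhs
    proof (intro exI[of _ R] conjI)
      show "left_total_preorder (G Mod H) R"
        using R0 by (simp add: left_total_preorder_iff)
      show "\<forall>i\<in>I. weakly_detected (G Mod H) R (H #> \<mu>I i) (H #> lI i) (sI i)"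
        using weak assms(1) by (simp add: weakly_detected_iff)
      show "\<forall>j\<in>J. strongly_detected (G Mod H) R (H #> \<mu>J j) (H #> lJ j) (sJ j)"
        using strong assms(2) by (simp add: strongly_detected_iff)
    qed
  next
    assume ?rhs
    then obtain R where R: "left_total_preorder (G Mod H) R"
      and weak: "\<forall>i\<in>I. weakly_detected (G Mod H) R (H #> \<mu>I i) (H #> lI i) (sI i)"
      and strong: "\<forall>j\<in>J. strongly_detected (G Mod H) R (H #> \<mu>J j) (H #> lJ j) (sJ j)"
      by blast
    define R0 where "R0 x y \<longleftrightarrow> R (H #> x) (H #> y)" for x y
    interpret rel_pullback G "G Mod H" "r_coset G H" R0 R
      using quotient_map quotient_map_surj
      by (simp add: rel_pullback_def rel_pullback_axioms_def R0_def)
    show ?lhs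
    proof (intro exI[of _ R0] conjI)
      show "left_total_preorder G R0"
        using R by (simp add: left_total_preorder_iff)
      show "H \<subseteq> residue_group G R0"
        using H_kernel kernel_subset_residue_group[OF R] by (rule order_trans)
      show "\<forall>i\<in>I. weakly_detected G R0 (\<mu>I i) (lI i) (sI i)"
        using weak assms(1) by (simp add: weakly_detected_iff)
      show "\<forall>j\<in>J. strongly_detected G R0 (\<mu>J j) (lJ j) (sJ j)"
        using strong assms(2) by (simp add: strongly_detected_iff)
    qed
  qed
qed

theorem theorem2p3:
  fixes G :: "('a, 'b) monoid_scheme"
    and I :: "'i set" and \<mu>I lI :: "'i \<Rightarrow> 'a" and sI :: "'i \<Rightarrow> real \<times> real"
    and J :: "'j set" and \<mu>J lJ :: "'j \<Rightarrow> 'a" and sJ :: "'j \<Rightarrow> int \<times> int"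
    and j0 :: 'j and p q :: int
  assumes "group G"
    and "\<forall>i\<in>I. \<mu>I i \<in> carrier G \<and> lI i \<in> carrier G \<and> \<mu>I i \<otimes>\<^bsub>G\<^esub> lI i = lI i \<otimes>\<^bsub>G\<^esub> \<mu>I i"
    and "\<forall>j\<in>J. \<mu>J j \<in> carrier G \<and> lJ j \<in> carrier G \<and> \<mu>J j \<otimes>\<^bsub>G\<^esub> lJ j = lJ j \<otimes>\<^bsub>G\<^esub> \<mu>J j"
    and "j0 \<in> J"
    and "coprime p q"
    and "\<forall>i\<in>I. sI i \<noteq> (0, 0)"
    and "\<forall>j\<in>J. coprime (fst (sJ j)) (snd (sJ j))"
    and "sJ j0 = (p, q)"
  shows "(\<exists>R0. left_total_preorder G R0 \<and>
            (\<forall>i\<in>I. weakly_detected G R0 (\<mu>I i) (lI i) (sI i)) \<and>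
            (\<forall>j\<in>J. strongly_detected G R0 (\<mu>J j) (lJ j) (sJ j)))
     \<longleftrightarrow>
     (let N = normal_closure G {\<mu>J j0 [^]\<^bsub>G\<^esub> p \<otimes>\<^bsub>G\<^esub> lJ j0 [^]\<^bsub>G\<^esub> q} in
      \<exists>R. left_total_preorder (G Mod N) R \<and>
            (\<forall>i\<in>I. weakly_detected (G Mod N) R (N #>\<^bsub>G\<^esub> \<mu>I i) (N #>\<^bsub>G\<^esub> lI i) (sI i)) \<and>
            (\<forall>j\<in>J - {j0}. strongly_detected (G Mod N) R (N #>\<^bsub>G\<^esub> \<mu>J j) (N #>\<^bsub>G\<^esub> lJ j) (sJ j)))"
proof -
  interpret group G by fact
  have carrier_I: "\<forall>i\<in>I. \<mu>I i \<in> carrier G \<and> lI i \<in> carrier G"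
    and carrier_J: "\<forall>j\<in>J. \<mu>J j \<in> carrier G \<and> lJ j \<in> carrier G"
    using assms(2,3) by blast+
  define N where "N = normal_closure G {\<mu>J j0 [^]\<^bsub>G\<^esub> p \<otimes>\<^bsub>G\<^esub> lJ j0 [^]\<^bsub>G\<^esub> q}"
  have "N \<lhd> G"
    unfolding N_def using carrier_J assms(4) by (intro normal_closure_normal) simp
  then interpret normal N G .
  have strong_J_iff: "(\<forall>j\<in>J. strongly_detected G R0 (\<mu>J j) (lJ j) (sJ j)) \<longleftrightarrow>
      N \<subseteq> residue_group G R0 \<and> (\<forall>j\<in>J - {j0}. strongly_detected G R0 (\<mu>J j) (lJ j) (sJ j))"
    if "left_total_preorder G R0" for R0
    using strongly_detected_iff_normal_closure_subset[OF that, of "\<mu>J j0" "lJ j0" "sJ j0"]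
      assms(4,8) unfolding N_def by auto
  have "\<forall>j\<in>J - {j0}. \<mu>J j \<in> carrier G \<and> lJ j \<in> carrier G"
    using carrier_J by blast
  note quotient = quotient_detection_iff[OF carrier_I this, of sI sJ]
  show ?thesis
    unfolding N_def[symmetric] Let_def quotient[symmetric]
    by (intro ex_cong1) (use strong_J_iff in blast)
qed

end
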